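(* Let $m$ be a prime power and let $l,s,t$ be positive integers such that $m\geq l-1$ and $2t-1\leq l$. Define $q=(s-1)m+1$. If there exists an $OA(t,l,s)$, then there exists a $q$-ary $c$-frameproof code of length $l$ and cardinality $\frac{s^t-1}{(s-1)^t}(q-1)^t$, for every integer $c\geq t$ such that $l=c(t-1)+r$ for some $r\in\{t,t+1,\ldots,c\}$.
   Context: An $OA(t,l,s)$ (orthogonal array of strength $t$, with $l$ constraints, $s\geq 2$ levels and index $1$) is an $l\times s^t$ array with entries from a set of $s$ symbols such that in every $t\times s^t$ subarray (choice of $t$ rows), every $t\times 1$ column vector over the symbol set appears exactly once. For $P\subseteq F^l$ over a finite alphabet $F$, $desc(P)=\{x\in F^l: \text{for every } i \text{ there is } y\in P \text{ with } x_i=y_i\}$. For an integer $c\geq 2$, a $c$-frameproof code of length $l$ is a subset $C\subseteq F^l$ with $desc(P)\cap C=P$ for every $P\subseteq C$ with $|P|\leq c$; it is $q$-ary if $|F|=q$. *)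

theory Defs
  imports Complex_Main "HOL-Computational_Algebra.Primes" "HOL-Library.FuncSet"
begin

definition prime_power :: "nat \<Rightarrow> bool" where
  "prime_power m \<longleftrightarrow> (\<exists>p k. prime p \<and> k \<ge> 1 \<and> m = p ^ k)"

definition is_OA :: "nat \<Rightarrow> nat \<Rightarrow> nat \<Rightarrow> 'a set \<Rightarrow> (nat \<Rightarrow> nat \<Rightarrow> 'a) \<Rightarrow> bool" where
  "is_OA t l s S A \<longleftrightarrow>
     s \<ge> 2 \<and> finite S \<and> card S = s \<and>
     (\<forall>i<l. \<forall>j<s ^ t. A i j \<in> S) \<and>
     (\<forall>T. T \<subseteq> {0..<l} \<and> card T = t \<longrightarrow>
        bij_betw (\<lambda>j. restrict (\<lambda>i. A i j) T) {0..<s ^ t} (PiE T (\<lambda>_. S)))"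

definition OA_exists :: "nat \<Rightarrow> nat \<Rightarrow> nat \<Rightarrow> bool" where
  "OA_exists t l s \<longleftrightarrow> (\<exists>(S :: nat set) A. is_OA t l s S A)"

definition words :: "nat \<Rightarrow> 'b set \<Rightarrow> (nat \<Rightarrow> 'b) set" where
  "words l F = PiE {0..<l} (\<lambda>_. F)"

definition desc :: "nat \<Rightarrow> 'b set \<Rightarrow> (nat \<Rightarrow> 'b) set \<Rightarrow> (nat \<Rightarrow> 'b) set" where
  "desc l F P = {x \<in> words l F. \<forall>i<l. \<exists>y\<in>P. x i = y i}"

definition frameproof :: "nat \<Rightarrow> nat \<Rightarrow> 'b set \<Rightarrow> (nat \<Rightarrow> 'b) set \<Rightarrow> bool" where
  "frameproof c l F C \<longleftrightarrow> C \<subseteq> words l F \<and>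
     (\<forall>P. P \<subseteq> C \<and> card P \<le> c \<longrightarrow> desc l F P \<inter> C = P)"

end

theory Submission
  imports Defs "HOL-Algebra.Algebraic_Closure" "HOL-Algebra.Multiplicative_Group"
    "HOL-Number_Theory.Residues"
begin

text \<open>An extended Reed--Solomon code over the field with m elements yields m^t words of length
  l \<le> m + 1 over m letters, any two of which agree in at most t - 1 positions. Take the s^t - 1
  columns of the OA other than column 0; in each row, write 0 where a column agrees with column 0
  and otherwise pair the entry (one of s - 1 values) with the corresponding letter of a code word,
  one of (s - 1) m further symbols. Any two OA columns agree in at most t - 1 rows, so every
  resulting word has at least l - (t - 1) > c (t - 1) nonzero positions, and any other word
  agrees with it on at most t - 1 of them (their OA columns or their code words differ). Hence
  c words never cover all nonzero positions of a further word: the (s^t - 1) m^t words form a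
  c-frameproof code.\<close>

context cring begin

lemma binomial_sum_Suc:
  assumes a: "a \<in> carrier R" and b: "b \<in> carrier R"
  shows "(\<Oplus>i\<in>{..Suc n}. [(Suc n choose i)] \<cdot> (a [^] i \<otimes> b [^] (Suc n - i)))
    = (\<Oplus>i\<in>{..n}. [(n choose i)] \<cdot> (a [^] Suc i \<otimes> b [^] (n - i)))
      \<oplus> (\<Oplus>i\<in>{..n}. [(n choose i)] \<cdot> (a [^] i \<otimes> b [^] (Suc n - i)))"
proof -
  define T where "T = (\<lambda>i. [(Suc n choose i)] \<cdot> (a [^] i \<otimes> b [^] (Suc n - i)))"
  define A where "A = (\<lambda>i. [(n choose i)] \<cdot> (a [^] Suc i \<otimes> b [^] (n - i)))"
  define B where "B = (\<lambda>i. [(n choose Suc i)] \<cdot> (a [^] Suc i \<otimes> b [^] (n - i)))"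
  define h where "h = (\<lambda>i. [(n choose i)] \<cdot> (a [^] i \<otimes> b [^] (Suc n - i)))"
  have carrier: "T i \<in> carrier R" "A i \<in> carrier R" "B i \<in> carrier R" "h i \<in> carrier R" for i
    unfolding T_def A_def B_def h_def using a b by simp_all
  have "(\<Oplus>i\<in>{..Suc n}. T i) = (\<Oplus>i\<in>{..n}. T (Suc i)) \<oplus> T 0"
    by (rule finsum_Suc2) (use carrier in auto)
  also have "(\<Oplus>i\<in>{..n}. T (Suc i)) = (\<Oplus>i\<in>{..n}. A i \<oplus> B i)"
    unfolding T_def A_def B_def using a b by (intro add.finprod_cong') (auto simp: add.nat_pow_mult)
  also have "(\<Oplus>i\<in>{..n}. A i \<oplus> B i) \<oplus> T 0 = (\<Oplus>i\<in>{..n}. A i) \<oplus> ((\<Oplus>i\<in>{..n}. B i) \<oplus> T 0)"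
    using carrier by (simp add: finsum_addf a_assoc)
  also have "(\<Oplus>i\<in>{..n}. B i) \<oplus> T 0 = (\<Oplus>i\<in>{..Suc n}. h i)"
  proof -
    have "(\<Oplus>i\<in>{..n}. B i) = (\<Oplus>i\<in>{..n}. h (Suc i))" unfolding B_def h_def by simp
    moreover have "T 0 = h 0" unfolding T_def h_def by simp
    ultimately show ?thesis by (simp add: finsum_Suc2[symmetric] carrier)
  qed
  also have "\<dots> = (\<Oplus>i\<in>{..n}. h i)"
    using carrier by (simp add: finsum_Suc h_def binomial_eq_0)
  finally show ?thesis unfolding T_def A_def h_def .
qed

lemma binomial_expansion:
  assumes a: "a \<in> carrier R" and b: "b \<in> carrier R"
  shows "(a \<oplus> b) [^] n = (\<Oplus>i\<in>{..n}. [(n choose i)] \<cdot> (a [^] i \<otimes> b [^] (n - i)))"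
proof (induction n)
  case 0
  show ?case using a b by (simp add: finsum_0)
next
  case (Suc n)
  define T where "T = (\<lambda>i. [(n choose i)] \<cdot> (a [^] i \<otimes> b [^] (n - i)))"
  have T: "T i \<in> carrier R" for i unfolding T_def using a b by simp
  have Ta: "T i \<otimes> a = [(n choose i)] \<cdot> ((a [^] i \<otimes> b [^] (n - i)) \<otimes> a)"
    and Tb: "T i \<otimes> b = [(n choose i)] \<cdot> ((a [^] i \<otimes> b [^] (n - i)) \<otimes> b)" for i
    unfolding T_def using a b by (simp_all add: add_pow_ldistr)
  have "(\<Oplus>i\<in>{..n}. T i \<otimes> a) = (\<Oplus>i\<in>{..n}. [(n choose i)] \<cdot> (a [^] Suc i \<otimes> b [^] (n - i)))"
  proof (rule add.finprod_cong')
    fix i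
    have "(a [^] i \<otimes> b [^] (n - i)) \<otimes> a = a [^] Suc i \<otimes> b [^] (n - i)"
      using a b by (simp add: nat_pow_Suc m_ac)
    then show "T i \<otimes> a = [(n choose i)] \<cdot> (a [^] Suc i \<otimes> b [^] (n - i))" by (simp only: Ta)
  qed (use a b in auto)
  moreover have "(\<Oplus>i\<in>{..n}. T i \<otimes> b) = (\<Oplus>i\<in>{..n}. [(n choose i)] \<cdot> (a [^] i \<otimes> b [^] (Suc n - i)))"
  proof (rule add.finprod_cong')
    fix i assume "i \<in> {..n}"
    then have "(a [^] i \<otimes> b [^] (n - i)) \<otimes> b = a [^] i \<otimes> b [^] (Suc n - i)"
      using a b by (simp add: nat_pow_Suc m_ac Suc_diff_le)
    then show "T i \<otimes> b = [(n choose i)] \<cdot> (a [^] i \<otimes> b [^] (Suc n - i))" by (simp only: Tb)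
  qed (use a b in auto)
  moreover have "(a \<oplus> b) [^] Suc n = (\<Oplus>i\<in>{..n}. T i \<otimes> a) \<oplus> (\<Oplus>i\<in>{..n}. T i \<otimes> b)"
    using Suc a b T by (simp add: nat_pow_Suc r_distr finsum_ldistr T_def)
  ultimately show ?case using binomial_sum_Suc[OF a b, of n] by simp
qed

lemma frobenius:
  assumes p: "normalization_semidom_class.prime (p::nat)" and char: "[p] \<cdot> \<one> = \<zero>"
    and a: "a \<in> carrier R" and b: "b \<in> carrier R"
  shows "(a \<oplus> b) [^] p = a [^] p \<oplus> b [^] p"
proof -
  define T where "T = (\<lambda>i. [(p choose i)] \<cdot> (a [^] i \<otimes> b [^] (p - i)))"
  have Tc: "\<And>i. T i \<in> carrier R" unfolding T_def using a b by simp
  obtain k where k: "p = Suc (Suc k)"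
    using prime_ge_2_nat[OF p] by (metis add_2_eq_Suc' le_Suc_ex add.commute)
  have "(a \<oplus> b) [^] p = (\<Oplus>i\<in>{..p}. T i)" unfolding T_def by (rule binomial_expansion[OF a b])
  also have "\<dots> = T (Suc (Suc k)) \<oplus> (\<Oplus>i\<in>{..Suc k}. T i)" unfolding k
    by (rule finsum_Suc) (use Tc in auto)
  also have "(\<Oplus>i\<in>{..Suc k}. T i) = (\<Oplus>i\<in>{..k}. T (Suc i)) \<oplus> T 0"
    by (rule finsum_Suc2) (use Tc in auto)
  also have "(\<Oplus>i\<in>{..k}. T (Suc i)) = (\<Oplus>i\<in>{..k}. \<zero>)"
  proof (rule add.finprod_cong')
    fix i assume i: "i \<in> {..k}"
    have "p dvd (p choose Suc i)" using i k by (intro dvd_choose_prime[OF _ _ _ p]) auto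
    then obtain c where c: "(p choose Suc i) = p * c" by blast
    have "[(p * c)] \<cdot> x = \<zero>" if x: "x \<in> carrier R" for x
    proof -
      have "[p] \<cdot> x = \<zero>" using add_pow_ldistr[OF one_closed x, of p] char x by simp
      moreover have "[(p * c)] \<cdot> x = [c] \<cdot> ([p] \<cdot> x)"
        using x by (simp add: add.nat_pow_pow mult.commute)
      ultimately show ?thesis by simp
    qed
    then show "T (Suc i) = \<zero>" unfolding T_def c using a b by simp
  qed auto
  also have "(\<Oplus>i\<in>{..k}. \<zero>) = \<zero>" by simp
  also have "T 0 = b [^] p" unfolding T_def using b by simp
  also have "T (Suc (Suc k)) = a [^] p" unfolding T_def k using a by simp
  finally show ?thesis using a b by simp
qed

lemma frobenius_pow:
  assumes p: "normalization_semidom_class.prime (p::nat)" and char: "[p] \<cdot> \<one> = \<zero>"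
    and a: "a \<in> carrier R" and b: "b \<in> carrier R"
  shows "(a \<oplus> b) [^] (p ^ k) = a [^] (p ^ k) \<oplus> b [^] (p ^ k)"
proof (induction k)
  case 0 then show ?case using a b by (simp add: nat_pow_eone)
next
  case (Suc k)
  have "(a \<oplus> b) [^] (p ^ Suc k) = ((a \<oplus> b) [^] (p ^ k)) [^] p"
    using a b by (simp add: nat_pow_pow mult.commute)
  also have "\<dots> = (a [^] (p ^ k) \<oplus> b [^] (p ^ k)) [^] p" using Suc by simp
  also have "\<dots> = (a [^] (p ^ k)) [^] p \<oplus> (b [^] (p ^ k)) [^] p"
    using a b by (intro frobenius[OF p char]) auto
  also have "\<dots> = a [^] (p ^ Suc k) \<oplus> b [^] (p ^ Suc k)"
    using a b by (simp add: nat_pow_pow mult.commute)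
  finally show ?case .
qed

lemma frobenius_pow_minus:
  assumes p: "normalization_semidom_class.prime (p::nat)" and char: "[p] \<cdot> \<one> = \<zero>"
    and a: "a \<in> carrier R" and b: "b \<in> carrier R"
  shows "(a \<ominus> b) [^] (p ^ k) = a [^] (p ^ k) \<ominus> b [^] (p ^ k)"
proof -
  have "a = (a \<ominus> b) \<oplus> b" using a b by algebra
  then have "a [^] (p ^ k) = (a \<ominus> b) [^] (p ^ k) \<oplus> b [^] (p ^ k)"
    using frobenius_pow[OF p char, of "a \<ominus> b" b k] a b by simp
  moreover have c: "(a \<ominus> b) [^] (p ^ k) \<in> carrier R" "b [^] (p ^ k) \<in> carrier R" using a b by auto
  moreover have "(a \<ominus> b) [^] (p ^ k) = ((a \<ominus> b) [^] (p ^ k) \<oplus> b [^] (p ^ k)) \<ominus> b [^] (p ^ k)"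
    using c by algebra
  ultimately show ?thesis by simp
qed

end

context ring begin

lemma eval_trinomial:
  assumes "x \<in> carrier R" "b \<in> carrier R" "c \<in> carrier R"
  shows "eval (\<one> # replicate n \<zero> @ [b, c]) x = x [^] (n + 2) \<oplus> (b \<otimes> x \<oplus> c)"
proof -
  have "eval (replicate n \<zero> @ [b, c]) x = eval [b, c] x"
    using assms by (intro eval_replicate) auto
  then show ?thesis using assms by simp
qed

lemma trinomial_in_univ_poly:
  assumes "subring K R" "b \<in> K" "c \<in> K" "\<one> \<noteq> \<zero>"
  shows "(\<one> # replicate n \<zero> @ [b, c]) \<in> carrier (K[X])"
proof -
  have "\<one> \<in> K" "\<zero> \<in> K" using assms(1) by (auto intro: subringE)
  then show ?thesis unfolding univ_poly_carrier[symmetric] polynomial_def using assms by auto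
qed

end

lemma card_set_mset_eq_size:
  assumes "\<And>x. count M x \<le> 1"
  shows "card (set_mset M) = size M"
proof -
  have "size M = sum (count M) (set_mset M)" by (rule size_multiset_overloaded_eq)
  also have "\<dots> = sum (\<lambda>_. 1) (set_mset M)"
    using assms by (intro sum.cong) (auto simp: le_Suc_eq count_eq_zero_iff)
  finally show ?thesis by simp
qed

context algebraic_closure begin

lemma trinomial_in_poly_rings:
  assumes "b \<in> K" "c \<in> K"
  shows "(\<one> # replicate n \<zero> @ [b, c]) \<in> carrier (K[X])"
    and "(\<one> # replicate n \<zero> @ [b, c]) \<in> carrier (poly_ring L)"
proof -
  show K: "(\<one> # replicate n \<zero> @ [b, c]) \<in> carrier (K[X])"
    using trinomial_in_univ_poly[OF subfieldE(1)[OF subfield_axioms] assms] by simp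
  then show "(\<one> # replicate n \<zero> @ [b, c]) \<in> carrier (poly_ring L)"
    using subfieldE(3)[OF subfield_axioms]
    unfolding univ_poly_carrier[symmetric] polynomial_def by auto
qed

text \<open>A finite field with N elements satisfies x^N = x, so x^N - x + 1 would have no root.\<close>
lemma infinite_carrier: "infinite (carrier L)"
proof
  assume fin: "finite (carrier L)"
  define N where "N = card (carrier L)"
  have "card {\<zero>, \<one>} \<le> N" unfolding N_def using fin by (intro card_mono) auto
  then have N2: "N \<ge> 2" by simp
  have xN: "x [^] N = x" if x: "x \<in> carrier L" for x
  proof (cases "x = \<zero>")
    case True then show ?thesis using N2 by (simp add: nat_pow_zero)
  next
    case False
    define M where "M = Multiplicative_Group.mult_of L"
    interpret M: group M unfolding M_def by (rule field_mult_group)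
    have "x [^]\<^bsub>M\<^esub> order M = \<one>\<^bsub>M\<^esub>"
      using x False by (intro M.pow_order_eq_1) (simp add: M_def)
    moreover have "order M = N - 1"
      using order_mult_of[OF fin] unfolding N_def order_def M_def by simp
    ultimately have "x [^] (N - 1) = \<one>" by (simp add: M_def Multiplicative_Group.nat_pow_mult_of)
    moreover have "x [^] N = x [^] (N - 1) \<otimes> x" using N2 nat_pow_Suc[of x "N - 1"] by simp
    ultimately show ?thesis using x by simp
  qed
  have K: "\<ominus> \<one> \<in> K" "\<one> \<in> K" using subfieldE(1)[OF subfield_axioms] by (auto intro: subringE)
  define g where "g = \<one> # replicate (N - 2) \<zero> @ [\<ominus> \<one>, \<one>]"
  have gK: "g \<in> carrier (K[X])" and gL: "g \<in> carrier (poly_ring L)"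
    unfolding g_def using trinomial_in_poly_rings[OF K] by auto
  have "size (roots g) = N"
    using roots_over_subfield[OF gK] unfolding splitted_def g_def using N2 by simp
  then obtain x where "x \<in># roots g"
    using N2 by (metis multiset_nonemptyE size_empty not_numeral_le_zero)
  then have x: "x \<in> carrier L" "eval g x = \<zero>"
    using roots_mem_iff_is_root[OF gL] unfolding is_root_def by auto
  have "eval g x = x [^] (N - 2 + 2) \<oplus> (\<ominus> \<one> \<otimes> x \<oplus> \<one>)"
    unfolding g_def by (rule eval_trinomial) (use x in auto)
  also have "N - 2 + 2 = N" using N2 by simp
  also have "x [^] N \<oplus> (\<ominus> \<one> \<otimes> x \<oplus> \<one>) = \<one>" using x(1) xN[OF x(1)] by algebra
  finally show False using x(2) by simp
qed

lemma eval_poly_ring_closed: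
  assumes "g \<in> carrier (poly_ring L)" "x \<in> carrier L"
  shows "eval g x \<in> carrier L"
  using assms eval_in_carrier polynomial_in_carrier[OF carrier_is_subring]
  unfolding univ_poly_carrier[symmetric] by blast

lemma eval_eq_zero_if_vanishes_off_point:
  assumes Q: "Q \<in> carrier (poly_ring L)" and a: "a \<in> carrier L"
    and vanish: "\<And>x. x \<in> carrier L \<Longrightarrow> x \<noteq> a \<Longrightarrow> eval Q x = \<zero>"
  shows "eval Q a = \<zero>"
proof (cases "Q = []")
  case False
  then have "carrier L - {a} \<subseteq> {x. is_root Q x}" using vanish unfolding is_root_def by auto
  then have "finite (carrier L - {a})" using finite_number_of_roots[OF Q] finite_subset by blast
  then show ?thesis using infinite_carrier by simp
qed simp

text \<open>This replaces the derivative test. With Y = X - a and a^q = a, the identity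
  X^q - X = (X - a)^2 g becomes Y^q - Y = Y^2 g, so the polynomial Y g - (Y^(q-1) - 1) vanishes
  wherever Y \<noteq> 0, yet it equals 1 at Y = 0.\<close>
lemma frobenius_poly_square_free:
  assumes p: "normalization_semidom_class.prime (p::nat)" and char: "[p] \<cdot> \<one> = \<zero>"
    and k: "k \<ge> 1" and a: "a \<in> carrier L" and g: "g \<in> carrier (poly_ring L)"
    and fac: "\<And>x. x \<in> carrier L \<Longrightarrow> x [^] (p ^ k) \<ominus> x = (x \<ominus> a) [^] (2::nat) \<otimes> eval g x"
  shows False
proof -
  define q where "q = p ^ k"
  have "p ^ 1 \<le> p ^ k" using k prime_ge_2_nat[OF p] by (intro power_increasing) auto
  then have q2: "q \<ge> 2" unfolding q_def using prime_ge_2_nat[OF p] by simp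
  have gc: "eval g x \<in> carrier L" if "x \<in> carrier L" for x
    using eval_poly_ring_closed[OF g that] .
  have aa: "a \<ominus> a = \<zero>" using a by simp
  have "a [^] q \<ominus> a = \<zero>"
    using fac[OF a] gc[OF a] a unfolding q_def aa by (simp add: numeral_2_eq_2)
  then have a_fixed: "a [^] q = a" using a by simp
  interpret UP: domain "poly_ring L" by (rule univ_poly_is_domain[OF carrier_is_subring])
  define lin where "lin = [\<one>, \<ominus> a]"
  have lin: "lin \<in> carrier (poly_ring L)"
    unfolding lin_def univ_poly_carrier[symmetric] polynomial_def using a by auto
  define Q where "Q = (lin \<otimes>\<^bsub>poly_ring L\<^esub> g) \<ominus>\<^bsub>poly_ring L\<^esub>
     (lin [^]\<^bsub>poly_ring L\<^esub> (q - 1) \<ominus>\<^bsub>poly_ring L\<^esub> \<one>\<^bsub>poly_ring L\<^esub>)"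
  have Q: "Q \<in> carrier (poly_ring L)" unfolding Q_def using lin g by simp
  have eval_Q: "eval Q x = (x \<ominus> a) \<otimes> eval g x \<ominus> ((x \<ominus> a) [^] (q - 1) \<ominus> \<one>)"
    if x: "x \<in> carrier L" for x
  proof -
    interpret H: ring_hom_ring "poly_ring L" L "\<lambda>p. eval p x"
      by (rule eval_ring_hom[OF carrier_is_subring x])
    have "eval lin x = x \<ominus> a" unfolding lin_def using x a by (simp add: minus_eq nat_pow_eone)
    moreover have "eval (lin [^]\<^bsub>poly_ring L\<^esub> (q - 1)) x = (eval lin x) [^] (q - 1)"
      using H.hom_nat_pow lin by simp
    ultimately show ?thesis unfolding Q_def using lin g by (simp add: UP.minus_eq minus_eq)
  qed
  have "(\<zero>::'a) [^] (q - 1) = \<zero>" using q2 by (simp add: nat_pow_zero)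
  then have "eval Q a = \<one>"
    using eval_Q[OF a] gc[OF a] unfolding aa by (simp add: minus_eq)
  moreover have "eval Q x = \<zero>" if x: "x \<in> carrier L" "x \<noteq> a" for x
  proof -
    define y where "y = x \<ominus> a"
    define G where "G = eval g x"
    define Y where "Y = y [^] (q - 1)"
    have y: "y \<in> carrier L" "y \<noteq> \<zero>" unfolding y_def using x a by auto
    have G: "G \<in> carrier L" and Y: "Y \<in> carrier L"
      unfolding G_def Y_def using gc[OF x(1)] y(1) by auto
    have "Suc (q - 1) = q" using q2 by simp
    then have "Y \<otimes> y = y [^] q" using nat_pow_Suc[of y "q - 1"] unfolding Y_def by simp
    also have "\<dots> = x [^] q \<ominus> a"
      using frobenius_pow_minus[OF p char x(1) a] a_fixed unfolding y_def q_def by simp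
    finally have "Y \<otimes> y = x [^] q \<ominus> a" .
    moreover have "(y \<otimes> y) \<otimes> G = x [^] q \<ominus> x"
      using fac[OF x(1)] y(1) unfolding G_def y_def q_def by (simp add: numeral_2_eq_2)
    moreover have "y \<otimes> eval Q x = (y \<otimes> y) \<otimes> G \<ominus> (Y \<otimes> y) \<oplus> y"
      unfolding eval_Q[OF x(1)] y_def[symmetric] G_def[symmetric] Y_def[symmetric]
      using y(1) G Y by algebra
    ultimately have "y \<otimes> eval Q x = (x [^] q \<ominus> x) \<ominus> (x [^] q \<ominus> a) \<oplus> (x \<ominus> a)"
      unfolding y_def by simp
    also have "\<dots> = \<zero>" using x(1) a nat_pow_closed[OF x(1)] by algebra
    finally show ?thesis
      using integral[of y "eval Q x"] y eval_poly_ring_closed[OF Q x(1)] by auto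
  qed
  ultimately show False using eval_eq_zero_if_vanishes_off_point[OF Q a] by simp
qed

lemma card_frobenius_fixed_points:
  assumes p: "normalization_semidom_class.prime (p::nat)" and char: "[p] \<cdot> \<one> = \<zero>"
    and k: "k \<ge> 1"
  shows "card {x \<in> carrier L. x [^] (p ^ k) = x} = p ^ k"
proof -
  define q where "q = p ^ k"
  have "p ^ 1 \<le> p ^ k" using k prime_ge_2_nat[OF p] by (intro power_increasing) auto
  then have q2: "q \<ge> 2" unfolding q_def using prime_ge_2_nat[OF p] by simp
  have K: "\<ominus> \<one> \<in> K" "\<zero> \<in> K" using subfieldE(1)[OF subfield_axioms] by (auto intro: subringE)
  define f where "f = \<one> # replicate (q - 2) \<zero> @ [\<ominus> \<one>, \<zero>]"
  have fK: "f \<in> carrier (K[X])" and fL: "f \<in> carrier (poly_ring L)"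
    unfolding f_def using trinomial_in_poly_rings[OF K] by auto
  have eval_f: "eval f x = x [^] q \<ominus> x" if x: "x \<in> carrier L" for x
  proof -
    have "eval f x = x [^] (q - 2 + 2) \<oplus> (\<ominus> \<one> \<otimes> x \<oplus> \<zero>)"
      unfolding f_def by (rule eval_trinomial) (use x in auto)
    also have "q - 2 + 2 = q" using q2 by simp
    finally show ?thesis using x by (simp add: minus_eq l_minus)
  qed
  have "f \<noteq> []" unfolding f_def by simp
  then have roots_f: "set_mset (roots f) = {x \<in> carrier L. x [^] q = x}"
    using roots_mem_iff_is_root[OF fL] eval_f unfolding is_root_def by auto
  have "size (roots f) = q"
    using roots_over_subfield[OF fK] unfolding splitted_def f_def using q2 by simp
  moreover have "count (roots f) a \<le> 1" for a
  proof (rule ccontr)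
    assume "\<not> ?thesis"
    then have am: "2 \<le> alg_mult f a" using alg_mult_eq_count_roots[OF fL] by simp
    then have a: "a \<in> carrier L" unfolding alg_mult_def using \<open>f \<noteq> []\<close> by (auto split: if_splits)
    define lin where "lin = [\<one>, \<ominus> a]"
    have lin: "lin \<in> carrier (poly_ring L)"
      unfolding lin_def univ_poly_carrier[symmetric] polynomial_def using a by auto
    have "(lin [^]\<^bsub>poly_ring L\<^esub> (2::nat)) pdivides f"
      unfolding lin_def by (rule le_alg_mult_imp_pdivides[OF a fL am])
    then obtain g where g: "g \<in> carrier (poly_ring L)"
      and f: "f = (lin [^]\<^bsub>poly_ring L\<^esub> (2::nat)) \<otimes>\<^bsub>poly_ring L\<^esub> g"
      unfolding pdivides_def factor_def by auto
    have "x [^] (p ^ k) \<ominus> x = (x \<ominus> a) [^] (2::nat) \<otimes> eval g x" if x: "x \<in> carrier L" for x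
    proof -
      interpret H: ring_hom_ring "poly_ring L" L "\<lambda>p. eval p x"
        by (rule eval_ring_hom[OF carrier_is_subring x])
      have "eval lin x = x \<ominus> a" unfolding lin_def using x a by (simp add: minus_eq nat_pow_eone)
      then have "eval f x = (x \<ominus> a) [^] (2::nat) \<otimes> eval g x"
        unfolding f using g lin H.hom_nat_pow by simp
      then show ?thesis using eval_f[OF x] unfolding q_def by simp
    qed
    then show False by (rule frobenius_poly_square_free[OF p char k a g])
  qed
  ultimately show ?thesis
    using card_set_mset_eq_size[of "roots f"] unfolding roots_f q_def by simp
qed

lemma frobenius_fixed_points_closed:
  assumes p: "normalization_semidom_class.prime (p::nat)" and char: "[p] \<cdot> \<one> = \<zero>"
    and k: "k \<ge> 1"
  defines "S \<equiv> {x \<in> carrier L. x [^] (p ^ k) = x}"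
  shows "S \<subseteq> carrier L \<and> card S = p ^ k \<and> \<zero> \<in> S \<and> \<one> \<in> S \<and>
    (\<forall>x\<in>S. \<forall>y\<in>S. x \<oplus> y \<in> S \<and> x \<otimes> y \<in> S)"
proof (intro conjI ballI)
  show "card S = p ^ k" unfolding S_def by (rule card_frobenius_fixed_points[OF p char k])
  show "\<zero> \<in> S" unfolding S_def using prime_gt_0_nat[OF p] by (simp add: nat_pow_zero)
  fix x y assume "x \<in> S" "y \<in> S"
  then have x: "x \<in> carrier L" "x [^] (p ^ k) = x" and y: "y \<in> carrier L" "y [^] (p ^ k) = y"
    unfolding S_def by auto
  show "x \<oplus> y \<in> S" unfolding S_def using frobenius_pow[OF p char x(1) y(1), of k] x y by simp
  show "x \<otimes> y \<in> S" unfolding S_def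
    using pow_mult_distrib[OF m_comm[OF x(1) y(1)] x(1) y(1), of "p ^ k"] x y by simp
qed (auto simp: S_def)

end

lemma (in ring_hom_ring) hom_add_pow:
  assumes "x \<in> carrier R"
  shows "h ([(n::nat)] \<cdot>\<^bsub>R\<^esub> x) = [n] \<cdot>\<^bsub>S\<^esub> (h x)"
  using assms by (induction n) (simp_all add: R.add.nat_pow_Suc S.add.nat_pow_Suc)

lemma (in residues) add_pow_one: "[n] \<cdot> \<one> = int n mod m"
proof (induction n)
  case 0 then show ?case by (simp add: res_zero_eq)
next
  case (Suc n)
  have "[Suc n] \<cdot> \<one> = [n] \<cdot> \<one> \<oplus> \<one>" by (simp add: add.nat_pow_Suc)
  also have "\<dots> = (int n + 1) mod m" using Suc by (simp add: res_add_eq res_one_eq mod_add_left_eq)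
  finally show ?case by (metis add.commute of_nat_Suc)
qed

text \<open>The field of order p^k, realised as the roots of X^(p^k) - X in an algebraic closure of
  the prime field; only its closure under the ring operations is recorded. The carrier type is
  the one produced by the closure construction.\<close>
lemma ex_closed_subset_of_field_with_prime_power_card:
  assumes p: "normalization_semidom_class.prime (p::nat)" and k: "k \<ge> 1"
  shows "\<exists>(L::((int list \<times> nat) multiset \<Rightarrow> int) ring) S. field L \<and> S \<subseteq> carrier L \<and>
     card S = p ^ k \<and> \<zero>\<^bsub>L\<^esub> \<in> S \<and> \<one>\<^bsub>L\<^esub> \<in> S \<and>
     (\<forall>x\<in>S. \<forall>y\<in>S. x \<oplus>\<^bsub>L\<^esub> y \<in> S \<and> x \<otimes>\<^bsub>L\<^esub> y \<in> S)"
proof -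
  define R where "R = residue_ring (int p)"
  from p interpret R: residues_prime p R
    by unfold_locales (simp_all add: R_def)
  obtain L :: "((int list \<times> nat) multiset \<Rightarrow> int) ring"
    where L: "algebraic_closure L (ring.indexed_const R ` carrier R)"
      and h: "ring.indexed_const R \<in> ring_hom R L"
    by (rule field.exists_closure[OF R.is_field])
  interpret L: algebraic_closure L "ring.indexed_const R ` carrier R" by (rule L)
  interpret h: ring_hom_ring R L "ring.indexed_const R"
    by (rule ring_hom_ringI2[OF R.ring_axioms L.ring_axioms h])
  have "[p] \<cdot>\<^bsub>R\<^esub> \<one>\<^bsub>R\<^esub> = \<zero>\<^bsub>R\<^esub>" using R.add_pow_one[of p] by (simp add: R.res_zero_eq)
  then have char: "[p] \<cdot>\<^bsub>L\<^esub> \<one>\<^bsub>L\<^esub> = \<zero>\<^bsub>L\<^esub>"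
    using h.hom_add_pow[OF R.one_closed, of p] by simp
  show ?thesis using L.frobenius_fixed_points_closed[OF p char k] L.field_axioms by blast
qed

context ring begin

definition eval_coeffs :: "(nat \<Rightarrow> 'a) \<Rightarrow> nat \<Rightarrow> 'a \<Rightarrow> 'a" where
  "eval_coeffs c n x = (\<Oplus>i\<in>{..<n}. c i \<otimes> x [^] i)"

lemma eval_coeffs_Suc:
  assumes "c \<in> {..<Suc n} \<rightarrow> carrier R" "x \<in> carrier R"
  shows "eval_coeffs c (Suc n) x = c n \<otimes> x [^] n \<oplus> eval_coeffs c n x"
  unfolding eval_coeffs_def lessThan_Suc using assms by (subst finsum_insert) (auto simp: Pi_def)

lemma eval_rev_map_eq_eval_coeffs:
  assumes "c \<in> {..<n} \<rightarrow> carrier R" "x \<in> carrier R"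
  shows "eval (map c (rev [0..<n])) x = eval_coeffs c n x"
  using assms
proof (induction n)
  case 0 then show ?case by (simp add: eval_coeffs_def)
next
  case (Suc n)
  then have "c \<in> {..<n} \<rightarrow> carrier R" by auto
  then show ?case using Suc by (simp add: eval_coeffs_Suc)
qed

lemma eval_coeffs_diff:
  assumes "u \<in> {..<n} \<rightarrow> carrier R" "v \<in> {..<n} \<rightarrow> carrier R" "x \<in> carrier R"
  shows "eval_coeffs (\<lambda>i. u i \<ominus> v i) n x = eval_coeffs u n x \<ominus> eval_coeffs v n x"
  using assms
proof (induction n)
  case 0 then show ?case by (simp add: eval_coeffs_def minus_eq)
next
  case (Suc n)
  have u: "u n \<in> carrier R" "eval_coeffs u n x \<in> carrier R"
    and v: "v n \<in> carrier R" "eval_coeffs v n x \<in> carrier R"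
    using Suc.prems unfolding eval_coeffs_def by (auto simp: Pi_def)
  have "eval_coeffs (\<lambda>i. u i \<ominus> v i) (Suc n) x
      = (u n \<ominus> v n) \<otimes> x [^] n \<oplus> (eval_coeffs u n x \<ominus> eval_coeffs v n x)"
    using Suc by (simp add: eval_coeffs_Suc Pi_def)
  also have "\<dots> = (u n \<otimes> x [^] n \<oplus> eval_coeffs u n x) \<ominus> (v n \<otimes> x [^] n \<oplus> eval_coeffs v n x)"
    using u v nat_pow_closed[OF Suc.prems(3)] by algebra
  finally show ?case using Suc.prems by (simp add: eval_coeffs_Suc)
qed

lemma eval_coeffs_closed_subset:
  assumes S: "\<zero> \<in> S" "\<one> \<in> S" "\<forall>x\<in>S. \<forall>y\<in>S. x \<oplus> y \<in> S \<and> x \<otimes> y \<in> S"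
    and c: "c \<in> {..<n} \<rightarrow> S" and x: "x \<in> S" and "S \<subseteq> carrier R"
  shows "eval_coeffs c n x \<in> S"
proof -
  have pow: "x [^] (i::nat) \<in> S" for i
    by (induction i) (use S x in \<open>simp_all add: nat_pow_Suc\<close>)
  show ?thesis using c
  proof (induction n)
    case 0 then show ?case using S by (simp add: eval_coeffs_def)
  next
    case (Suc n)
    then have "c \<in> {..<n} \<rightarrow> S" "c n \<in> S" by auto
    then have "eval_coeffs c n x \<in> S" "c n \<in> S" using Suc.IH by auto
    then show ?case using Suc.prems S pow \<open>S \<subseteq> carrier R\<close> x
      by (subst eval_coeffs_Suc) auto
  qed
qed

end

lemma (in field) card_roots_eval_coeffs_less:
  assumes c: "c \<in> {..<n} \<rightarrow> carrier R" and nz: "\<exists>i<n. c i \<noteq> \<zero>"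
    and Y: "Y \<subseteq> carrier R" and roots: "\<And>x. x \<in> Y \<Longrightarrow> eval_coeffs c n x = \<zero>"
  shows "card Y < n"
proof -
  define p where "p = map c (rev [0..<n])"
  have setp: "set p \<subseteq> carrier R" unfolding p_def using c by auto
  define q where "q = normalize p"
  have qpoly: "q \<in> carrier (poly_ring R)"
    unfolding q_def univ_poly_carrier[symmetric] using normalize_gives_polynomial[OF setp] .
  have "q \<noteq> []"
  proof
    assume "q = []"
    then have "p = replicate (length p) \<zero>" using normalize_trick[of p] unfolding q_def by simp
    moreover obtain i where "i < n" "c i \<noteq> \<zero>" using nz by blast
    moreover have "c i \<in> set p" unfolding p_def using \<open>i < n\<close> by auto
    ultimately show False by (metis in_set_replicate)
  qed
  have "eval q x = eval_coeffs c n x" if "x \<in> carrier R" for x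
    unfolding q_def using eval_normalize[OF setp that] eval_rev_map_eq_eval_coeffs[OF c that] p_def
    by simp
  then have "Y \<subseteq> set_mset (roots q)"
    using Y roots \<open>q \<noteq> []\<close> roots_mem_iff_is_root[OF qpoly] unfolding is_root_def by auto
  then have "card Y \<le> card (set_mset (roots q))" by (intro card_mono) auto
  also have "\<dots> \<le> size (roots q)"
    by (metis mset_set_set_mset_msubset size_mset_mono size_mset_set)
  also have "\<dots> \<le> degree q" by (rule size_roots_le_degree[OF qpoly])
  also have "\<dots> < n"
  proof -
    have "length q \<le> length p" unfolding q_def by (rule normalize_length_le)
    then show ?thesis using \<open>q \<noteq> []\<close> unfolding p_def by (cases q) auto
  qed
  finally show ?thesis .
qed

text \<open>Two distinct polynomials of degree below t agree at most at t - 1 points, where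
  agreement of the leading coefficients (the point at infinity) counts as one of them.\<close>
lemma (in field) card_agreements_eval_coeffs:
  assumes u: "u \<in> {..<t} \<rightarrow> carrier R" and v: "v \<in> {..<t} \<rightarrow> carrier R"
    and uv: "\<exists>k<t. u k \<noteq> v k" and Y: "Y \<subseteq> carrier R"
    and agree: "\<And>x. x \<in> Y \<Longrightarrow> eval_coeffs u t x = eval_coeffs v t x"
  shows "card Y + (if u (t - 1) = v (t - 1) then 1 else 0) \<le> t - 1"
proof -
  define d where "d = (\<lambda>i. u i \<ominus> v i)"
  have d: "d \<in> {..<t} \<rightarrow> carrier R" unfolding d_def using u v by auto
  obtain k where k: "k < t" "d k \<noteq> \<zero>" using uv u v unfolding d_def by (auto simp: Pi_def)
  have roots: "eval_coeffs d t x = \<zero>" if "x \<in> Y" for x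
  proof -
    have x: "x \<in> carrier R" using Y that by auto
    have "eval_coeffs v t x \<in> carrier R" using eval_coeffs_closed_subset[OF _ _ _ v x] by simp
    then show ?thesis unfolding d_def eval_coeffs_diff[OF u v x] agree[OF that] by simp
  qed
  show ?thesis
  proof (cases "u (t - 1) = v (t - 1)")
    case False
    have "card Y < t" using card_roots_eval_coeffs_less[OF d _ Y roots] k by auto
    then show ?thesis using False by simp
  next
    case True
    then have "d (t - 1) = \<zero>" unfolding d_def using v k(1) by (auto simp: Pi_def)
    then have "k < t - 1" using k by (cases "k = t - 1") auto
    have t: "t = Suc (t - 1)" using k by simp
    have "eval_coeffs d (t - 1) x = \<zero>" if "x \<in> Y" for x
      using roots[OF that] eval_coeffs_Suc[of d "t - 1" x] d \<open>d (t - 1) = \<zero>\<close> Y that t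
      by (auto simp: Pi_def eval_coeffs_def)
    moreover have "d \<in> {..<t - 1} \<rightarrow> carrier R" using d by auto
    ultimately have "card Y < t - 1"
      using card_roots_eval_coeffs_less[of d "t - 1" Y] \<open>k < t - 1\<close> k(2) Y by blast
    then show ?thesis using True by simp
  qed
qed

definition agree_at_most :: "nat \<Rightarrow> nat \<Rightarrow> (nat \<Rightarrow> 'a) set \<Rightarrow> bool" where
  "agree_at_most l k U \<longleftrightarrow> (\<forall>u\<in>U. \<forall>v\<in>U. u \<noteq> v \<longrightarrow> card {i\<in>{0..<l}. u i = v i} \<le> k)"

text \<open>Reed--Solomon code, extended by the point at infinity: a coefficient vector is evaluated
  at the m field elements and, in position m, read off its leading coefficient.\<close>
lemma (in field) ex_reed_solomon_code:
  assumes S: "S \<subseteq> carrier R" "finite S" "card S = m" "\<zero> \<in> S" "\<one> \<in> S"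
      "\<forall>x\<in>S. \<forall>y\<in>S. x \<oplus> y \<in> S \<and> x \<otimes> y \<in> S"
    and t: "1 \<le> t" "t \<le> l" and l: "l \<le> m + 1"
  shows "\<exists>U. U \<subseteq> words l {0..<m} \<and> card U = m ^ t \<and> agree_at_most l (t - 1) U"
proof -
  obtain \<sigma> where \<sigma>: "bij_betw \<sigma> {0..<m} S" using ex_bij_betw_nat_finite[OF S(2)] S(3) by auto
  define \<beta> where "\<beta> = inv_into {0..<m} \<sigma>"
  have \<beta>: "bij_betw \<beta> S {0..<m}" unfolding \<beta>_def by (rule bij_betw_inv_into[OF \<sigma>])
  have \<sigma>S: "\<And>i. i < m \<Longrightarrow> \<sigma> i \<in> S" using \<sigma> by (auto dest: bij_betwE)
  define V where "V = PiE {0..<t} (\<lambda>_. S)"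
  define val where "val = (\<lambda>u i. if i < m then eval_coeffs u t (\<sigma> i) else u (t - 1))"
  define word where "word = (\<lambda>u. \<lambda>i\<in>{0..<l}. \<beta> (val u i))"
  have VS: "u \<in> {..<t} \<rightarrow> S" if "u \<in> V" for u using that unfolding V_def by auto
  have Vc: "u \<in> {..<t} \<rightarrow> carrier R" if "u \<in> V" for u using VS[OF that] S(1) by auto
  have valS: "val u i \<in> S" if "u \<in> V" for u i
    using eval_coeffs_closed_subset[OF S(4-6) VS[OF that] \<sigma>S S(1)] VS[OF that] t
    unfolding val_def by auto
  have agree: "card {i\<in>{0..<l}. word u i = word v i} \<le> t - 1"
    if uv: "u \<in> V" "v \<in> V" "u \<noteq> v" for u v
  proof -
    define Pts where "Pts = {i\<in>{0..<l}. i < m \<and> val u i = val v i}"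
    define Inf where "Inf = (if u (t - 1) = v (t - 1) then {m} else {})"
    have "{i\<in>{0..<l}. word u i = word v i} = {i\<in>{0..<l}. val u i = val v i}"
      unfolding word_def using bij_betw_imp_inj_on[OF \<beta>] valS[OF uv(1)] valS[OF uv(2)]
      by (auto dest: inj_onD)
    also have "\<dots> \<subseteq> Pts \<union> Inf"
      unfolding Pts_def Inf_def val_def using l by auto
    finally have "card {i\<in>{0..<l}. word u i = word v i} \<le> card (Pts \<union> Inf)"
      by (intro card_mono) (auto simp: Pts_def Inf_def)
    also have "\<dots> \<le> card Pts + card Inf" by (rule card_Un_le)
    also have "card Inf = (if u (t - 1) = v (t - 1) then 1 else 0)" unfolding Inf_def by simp
    also have "card Pts = card (\<sigma> ` Pts)"
      using inj_on_subset[OF bij_betw_imp_inj_on[OF \<sigma>], of Pts]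
      by (simp add: card_image Pts_def subset_eq)
    also have "card (\<sigma> ` Pts) + (if u (t - 1) = v (t - 1) then 1 else 0) \<le> t - 1"
    proof (rule card_agreements_eval_coeffs[OF Vc[OF uv(1)] Vc[OF uv(2)]])
      show "\<exists>k<t. u k \<noteq> v k"
        using uv unfolding V_def by (metis PiE_ext atLeastLessThan_iff zero_le)
      show "\<sigma> ` Pts \<subseteq> carrier R" using \<sigma>S S(1) by (auto simp: Pts_def)
    qed (auto simp: Pts_def val_def)
    finally show ?thesis .
  qed
  have "inj_on word V"
  proof (rule inj_onI, rule ccontr)
    fix u v assume "u \<in> V" "v \<in> V" "word u = word v" "u \<noteq> v"
    then show False using agree[of u v] t by simp
  qed
  then have "card (word ` V) = card V" by (rule card_image)
  also have "card V = m ^ t" unfolding V_def using S(2,3) by (simp add: card_PiE)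
  finally have "card (word ` V) = m ^ t" .
  moreover have "word ` V \<subseteq> words l {0..<m}"
    unfolding words_def word_def using valS \<beta> by (auto simp: PiE_iff dest: bij_betwE)
  moreover have "agree_at_most l (t - 1) (word ` V)"
    unfolding agree_at_most_def using agree by auto
  ultimately show ?thesis by blast
qed

lemma ex_code_prime_power:
  assumes "prime_power m" "1 \<le> t" "t \<le> l" "l \<le> m + 1"
  shows "\<exists>U. U \<subseteq> words l {0..<m} \<and> card U = m ^ t \<and> agree_at_most l (t - 1) U"
proof -
  obtain p k where p: "normalization_semidom_class.prime p" and k: "k \<ge> 1" and m: "m = p ^ k"
    using assms(1) unfolding prime_power_def by blast
  obtain L :: "((int list \<times> nat) multiset \<Rightarrow> int) ring" and S where
    L: "field L" "S \<subseteq> carrier L" "card S = p ^ k" "\<zero>\<^bsub>L\<^esub> \<in> S" "\<one>\<^bsub>L\<^esub> \<in> S"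
       "\<forall>x\<in>S. \<forall>y\<in>S. x \<oplus>\<^bsub>L\<^esub> y \<in> S \<and> x \<otimes>\<^bsub>L\<^esub> y \<in> S"
    using ex_closed_subset_of_field_with_prime_power_card[OF p k] by blast
  have "finite S" using L(3) prime_gt_0_nat[OF p] by (intro card_ge_0_finite) simp
  then show ?thesis
    using field.ex_reed_solomon_code[OF L(1,2) _ L(3)[folded m] L(4-6) assms(2-4)] by blast
qed

text \<open>A word outside a coalition P descends from P only if the members of P together cover all
  of its positions.\<close>
lemma frameproof_if_agreements_bounded:
  assumes C: "C \<subseteq> words l F" "finite C"
    and few_agreements: "\<And>x. x \<in> C \<Longrightarrow> \<exists>N \<subseteq> {0..<l}. c * k < card N \<and>
              (\<forall>y\<in>C. y \<noteq> x \<longrightarrow> card {i\<in>N. x i = y i} \<le> k)"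
  shows "frameproof c l F C"
  unfolding frameproof_def
proof (intro conjI allI impI)
  fix P assume P: "P \<subseteq> C \<and> card P \<le> c"
  have "finite P" using P C(2) finite_subset by blast
  show "desc l F P \<inter> C = P"
  proof
    show "P \<subseteq> desc l F P \<inter> C" using P C(1) unfolding desc_def by blast
    show "desc l F P \<inter> C \<subseteq> P"
    proof (rule subsetI, rule ccontr)
      fix x assume x: "x \<in> desc l F P \<inter> C" and "x \<notin> P"
      obtain N where N: "N \<subseteq> {0..<l}" "c * k < card N"
        and agree: "\<forall>y\<in>C. y \<noteq> x \<longrightarrow> card {i\<in>N. x i = y i} \<le> k"
        using few_agreements[of x] x by auto
      have "N \<subseteq> (\<Union>y\<in>P. {i\<in>N. x i = y i})" using x N(1) unfolding desc_def by auto
      moreover have "finite (\<Union>y\<in>P. {i\<in>N. x i = y i})"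
        using finite_subset[OF N(1)] by (rule finite_subset[rotated]) auto
      ultimately have "card N \<le> card (\<Union>y\<in>P. {i\<in>N. x i = y i})" by (rule card_mono[rotated])
      also have "\<dots> \<le> (\<Sum>y\<in>P. card {i\<in>N. x i = y i})" by (rule card_UN_le[OF \<open>finite P\<close>])
      also have "\<dots> \<le> card P * k"
      proof -
        have "card {i\<in>N. x i = y i} \<le> k" if "y \<in> P" for y
        proof -
          have "y \<in> C" "y \<noteq> x" using P \<open>x \<notin> P\<close> that by auto
          then show ?thesis using agree by blast
        qed
        then show ?thesis using sum_bounded_above[of P "\<lambda>y. card {i\<in>N. x i = y i}" k] by simp
      qed
      also have "\<dots> \<le> c * k" using P by simp
      finally show False using N(2) by simp
    qed
  qed
qed (use C in simp)

lemma OA_card_agreements: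
  assumes "is_OA t l s S A" "j < s ^ t" "k < s ^ t" "j \<noteq> k"
  shows "card {i\<in>{0..<l}. A i j = A i k} \<le> t - 1"
proof (rule ccontr)
  assume "\<not> ?thesis"
  then have "t \<le> card {i\<in>{0..<l}. A i j = A i k}" by simp
  then obtain T where T: "T \<subseteq> {i\<in>{0..<l}. A i j = A i k}" "card T = t"
    by (meson obtain_subset_with_card_n)
  have "\<forall>T. T \<subseteq> {0..<l} \<and> card T = t \<longrightarrow>
      bij_betw (\<lambda>j. restrict (\<lambda>i. A i j) T) {0..<s ^ t} (PiE T (\<lambda>_. S))"
    using assms(1) unfolding is_OA_def by blast
  moreover have "T \<subseteq> {0..<l}" using T(1) by auto
  ultimately have "bij_betw (\<lambda>j. restrict (\<lambda>i. A i j) T) {0..<s ^ t} (PiE T (\<lambda>_. S))"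
    using T(2) by blast
  then have "inj_on (\<lambda>j. restrict (\<lambda>i. A i j) T) {0..<s ^ t}" by (rule bij_betw_imp_inj_on)
  moreover have "restrict (\<lambda>i. A i j) T = restrict (\<lambda>i. A i k) T"
    by (rule restrict_ext) (use T(1) in auto)
  ultimately show False using assms(2-4) by (auto dest: inj_onD)
qed

locale OA_concatenation =
  fixes t l s m :: nat and S :: "'a set" and A :: "nat \<Rightarrow> nat \<Rightarrow> 'a" and U :: "(nat \<Rightarrow> nat) set"
  assumes OA: "is_OA t l s S A"
    and U_words: "U \<subseteq> words l {0..<m}"
    and U_agree: "agree_at_most l (t - 1) U"
begin

lemma s_ge_2: "s \<ge> 2" and finite_S: "finite S" and card_S: "card S = s"
  and A_in_S: "\<And>i j. i < l \<Longrightarrow> j < s ^ t \<Longrightarrow> A i j \<in> S"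
  using OA unfolding is_OA_def by auto

lemma U_less: "u \<in> U \<Longrightarrow> i < l \<Longrightarrow> u i < m"
  using U_words unfolding words_def by (auto simp: PiE_iff)

definition rank :: "nat \<Rightarrow> 'a \<Rightarrow> nat" where
  "rank i = (SOME \<phi>. bij_betw \<phi> (S - {A i 0}) {0..<s - 1})"

lemma bij_rank: "i < l \<Longrightarrow> bij_betw (rank i) (S - {A i 0}) {0..<s - 1}"
proof -
  assume "i < l"
  then have "card (S - {A i 0}) = s - 1" using A_in_S s_ge_2 finite_S card_S by simp
  then have "\<exists>\<phi>. bij_betw \<phi> (S - {A i 0}) {0..<s - 1}"
    using ex_bij_betw_finite_nat[of "S - {A i 0}"] finite_S by auto
  then show ?thesis unfolding rank_def by (rule someI_ex)
qed

text \<open>Symbol 0 marks the entries of the reference column 0; the remaining s - 1 entries of a row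
  are numbered by rank and each is split into m symbols by the code word.\<close>
definition symbol :: "nat \<Rightarrow> 'a \<Rightarrow> nat \<Rightarrow> nat" where
  "symbol i a b = (if a = A i 0 then 0 else 1 + rank i a * m + b)"

definition codeword :: "nat \<Rightarrow> (nat \<Rightarrow> nat) \<Rightarrow> nat \<Rightarrow> nat" where
  "codeword j u = (\<lambda>i\<in>{0..<l}. symbol i (A i j) (u i))"

definition support :: "nat \<Rightarrow> nat set" where
  "support j = {i\<in>{0..<l}. A i j \<noteq> A i 0}"

definition code :: "(nat \<Rightarrow> nat) set" where
  "code = (\<lambda>(j, u). codeword j u) ` ({1..<s ^ t} \<times> U)"

lemma symbol_less:
  assumes i: "i < l" and "a \<in> S" "b < m"
  shows "symbol i a b < (s - 1) * m + 1"
proof (cases "a = A i 0")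
  case False
  then have "rank i a < s - 1" using bij_rank[OF i] \<open>a \<in> S\<close> by (auto dest: bij_betwE)
  then have "(rank i a + 1) * m \<le> (s - 1) * m" by (intro mult_le_mono1) simp
  then show ?thesis unfolding symbol_def using \<open>b < m\<close> False by simp
qed (simp add: symbol_def)

lemma symbol_eq_imp:
  assumes i: "i < l" and a: "a \<in> S" "a' \<in> S" and b: "b < m" "b' < m"
    and eq: "symbol i a b = symbol i a' b'"
  shows "a = a'" and "a \<noteq> A i 0 \<Longrightarrow> b = b'"
proof -
  have zero_iff: "symbol i x y = 0 \<longleftrightarrow> x = A i 0" for x y by (simp add: symbol_def)
  have "a = a' \<and> (a \<noteq> A i 0 \<longrightarrow> b = b')"
  proof (cases "a = A i 0")
    case True
    then show ?thesis using eq zero_iff by metis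
  next
    case False
    then have a': "a' \<noteq> A i 0" using eq zero_iff by metis
    then have sum: "rank i a * m + b = rank i a' * m + b'"
      using eq False unfolding symbol_def by simp
    have "b = (rank i a * m + b) mod m" using b(1) by simp
    also have "\<dots> = b'" unfolding sum using b(2) by simp
    finally have "b = b'" .
    then have "rank i a = rank i a'" using sum b by simp
    then show ?thesis
      using bij_betw_imp_inj_on[OF bij_rank[OF i]] a False a' \<open>b = b'\<close> by (auto dest: inj_onD)
  qed
  then show "a = a'" and "a \<noteq> A i 0 \<Longrightarrow> b = b'" by auto
qed

lemma code_subset_words: "code \<subseteq> words l {0..<(s - 1) * m + 1}"
  unfolding code_def codeword_def words_def
  using symbol_less A_in_S U_less s_ge_2 by (auto simp: PiE_iff)

lemma card_support:
  assumes "j \<in> {1..<s ^ t}"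
  shows "l \<le> card (support j) + (t - 1)"
proof -
  have "{0..<l} = support j \<union> {i\<in>{0..<l}. A i j = A i 0}" unfolding support_def by auto
  then have "l \<le> card (support j) + card {i\<in>{0..<l}. A i j = A i 0}"
    by (metis card_Un_le card_atLeastLessThan diff_zero)
  moreover have "card {i\<in>{0..<l}. A i j = A i 0} \<le> t - 1"
    using OA_card_agreements[OF OA, of j 0] assms s_ge_2 by auto
  ultimately show ?thesis by linarith
qed

lemma card_agreements_on_support:
  assumes j: "j \<in> {1..<s ^ t}" and k: "k \<in> {1..<s ^ t}" and uv: "u \<in> U" "v \<in> U"
    and ne: "(j, u) \<noteq> (k, v)"
  shows "card {i\<in>support j. codeword j u i = codeword k v i} \<le> t - 1"
proof -
  have agree: "A i j = A i k \<and> u i = v i"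
    if "i \<in> support j" "codeword j u i = codeword k v i" for i
  proof -
    have i: "i < l" "A i j \<noteq> A i 0" using that(1) unfolding support_def by auto
    then have "A i j \<in> S" "A i k \<in> S" using A_in_S j k by auto
    then show ?thesis
      using symbol_eq_imp[OF i(1) _ _ U_less[OF uv(1) i(1)] U_less[OF uv(2) i(1)]] that(2) i
      unfolding codeword_def by auto
  qed
  show ?thesis
  proof (cases "j = k")
    case True
    then have "u \<noteq> v" using ne by simp
    have "{i\<in>support j. codeword j u i = codeword k v i} \<subseteq> {i\<in>{0..<l}. u i = v i}"
      using agree unfolding support_def by auto
    then have "card {i\<in>support j. codeword j u i = codeword k v i}
        \<le> card {i\<in>{0..<l}. u i = v i}"
      by (intro card_mono) auto
    also have "\<dots> \<le> t - 1" using U_agree uv \<open>u \<noteq> v\<close> unfolding agree_at_most_def by blast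
    finally show ?thesis .
  next
    case False
    have "{i\<in>support j. codeword j u i = codeword k v i} \<subseteq> {i\<in>{0..<l}. A i j = A i k}"
      using agree unfolding support_def by auto
    then have "card {i\<in>support j. codeword j u i = codeword k v i}
        \<le> card {i\<in>{0..<l}. A i j = A i k}"
      by (intro card_mono) auto
    also have "\<dots> \<le> t - 1" using OA_card_agreements[OF OA] j k False by auto
    finally show ?thesis .
  qed
qed

lemma inj_on_codeword:
  assumes "2 * (t - 1) < l"
  shows "inj_on (\<lambda>(j, u). codeword j u) ({1..<s ^ t} \<times> U)"
proof (rule inj_onI, clarify, rule ccontr)
  fix j u k v assume jk: "j \<in> {1..<s ^ t}" "k \<in> {1..<s ^ t}" and uv: "u \<in> U" "v \<in> U"
    and eq: "codeword j u = codeword k v" and "\<not> (j = k \<and> u = v)"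
  then have "card (support j) \<le> t - 1"
    using card_agreements_on_support[OF jk uv] by simp
  then show False using card_support[OF jk(1)] assms by linarith
qed

lemma finite_U: "finite U"
  using U_words finite_subset unfolding words_def by (blast intro: finite_PiE)

lemma card_code:
  assumes "2 * (t - 1) < l"
  shows "card code = (s ^ t - 1) * card U"
  unfolding code_def using card_image[OF inj_on_codeword[OF assms]]
  by (simp add: card_cartesian_product)

lemma code_frameproof:
  assumes "(c + 1) * (t - 1) < l"
  shows "frameproof c l {0..<(s - 1) * m + 1} code"
proof (rule frameproof_if_agreements_bounded[OF code_subset_words])
  show "finite code" unfolding code_def using finite_U by simp
  fix x assume "x \<in> code"
  then obtain j u where ju: "j \<in> {1..<s ^ t}" "u \<in> U" and x: "x = codeword j u"
    unfolding code_def by auto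
  have "support j \<subseteq> {0..<l}" unfolding support_def by auto
  moreover have "c * (t - 1) < card (support j)" using card_support[OF ju(1)] assms by simp
  moreover have "card {i\<in>support j. x i = y i} \<le> t - 1" if "y \<in> code" "y \<noteq> x" for y
  proof -
    obtain k v where kv: "k \<in> {1..<s ^ t}" "v \<in> U" and y: "y = codeword k v"
      using \<open>y \<in> code\<close> unfolding code_def by auto
    then have "(j, u) \<noteq> (k, v)" using \<open>y \<noteq> x\<close> x by auto
    then show ?thesis using card_agreements_on_support[OF ju(1) kv(1) ju(2) kv(2)] x y by simp
  qed
  ultimately show "\<exists>N\<subseteq>{0..<l}. c * (t - 1) < card N \<and>
      (\<forall>y\<in>code. y \<noteq> x \<longrightarrow> card {i\<in>N. x i = y i} \<le> t - 1)" by blast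
qed

end

theorem lemma7:
  fixes m l s t :: nat
  assumes "prime_power m"
    and "l > 0" and "s > 0" and "t > 0"
    and "m \<ge> l - 1"
    and "2 * t - 1 \<le> l"
    and "OA_exists t l s"
  shows "\<forall>c::nat. c \<ge> t \<and> (\<exists>r. t \<le> r \<and> r \<le> c \<and> l = c * (t - 1) + r) \<longrightarrow>
           (\<exists>(F :: nat set) C. finite F \<and> card F = (s - 1) * m + 1 \<and> frameproof c l F C \<and>
              real (card C) = (real s ^ t - 1) / (real s - 1) ^ t * (real ((s - 1) * m + 1) - 1) ^ t)"
proof (intro allI impI)
  fix c :: nat
  assume "c \<ge> t \<and> (\<exists>r. t \<le> r \<and> r \<le> c \<and> l = c * (t - 1) + r)"
  then obtain r where r: "t \<le> r" "l = c * (t - 1) + r" by blast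
  obtain S :: "nat set" and A where OA: "is_OA t l s S A"
    using assms(7) unfolding OA_exists_def by blast
  have "1 \<le> t" "t \<le> l" "l \<le> m + 1" using assms(4-6) by linarith+
  then obtain U where U: "U \<subseteq> words l {0..<m}" "card U = m ^ t" "agree_at_most l (t - 1) U"
    using ex_code_prime_power[OF assms(1)] by blast
  interpret OA_concatenation t l s m S A U by unfold_locales (use OA U in auto)
  have "(c + 1) * (t - 1) = c * (t - 1) + (t - 1)" by simp
  then have "frameproof c l {0..<(s - 1) * m + 1} code"
    using r assms(4) by (intro code_frameproof) linarith
  moreover have "card code = (s ^ t - 1) * m ^ t" using card_code U(2) assms(4,6) by simp
  moreover have "real ((s ^ t - 1) * m ^ t)
      = (real s ^ t - 1) / (real s - 1) ^ t * (real ((s - 1) * m + 1) - 1) ^ t"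
    using s_ge_2 by (simp add: of_nat_diff power_mult_distrib)
  ultimately show "\<exists>(F :: nat set) C. finite F \<and> card F = (s - 1) * m + 1 \<and> frameproof c l F C \<and>
      real (card C) = (real s ^ t - 1) / (real s - 1) ^ t * (real ((s - 1) * m + 1) - 1) ^ t"
    by (metis card_atLeastLessThan diff_zero finite_atLeastLessThan)
qed

end
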